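(* Let $\mathcal T$ be a good triangulation of $\mathcal C_G$ and $S\in\mathcal T$ a maximal simplex. Then every connected component of the graph $(V,D(S))$ (including components consisting of a single node) contains exactly one selected node, i.e. exactly one node of $V(S)$.
   Context: For a finite undirected multigraph $G=(V,E)$ (loops, parallel edges and isolated nodes allowed) with $n=|V|$, $m=|E|$, work in $\mathbb{R}^V\times\mathbb{R}^E\cong\mathbb{R}^{n+m}$ with standard basis vectors $e_u$ ($u\in V$), $e_f$ ($f\in E$). Fix for each edge $f$ an ordering $(u,v)$ of its endpoints ($u=v$ for a loop) and set $\widetilde e_f=e_u+e_v-e_f$, $\overleftarrow e_f=e_u-e_v+e_f$, $\overrightarrow e_f=-e_u+e_v+e_f$ (so for a loop $\overleftarrow e_f=\overrightarrow e_f=e_f$). The cosmological polytope $\mathcal C_G$ is the convex hull of $\{e_f,\widetilde e_f,\overleftarrow e_f,\overrightarrow e_f: f\in E\}\cup\{e_u: u\in V\}$; these are exactly its lattice points, and it is an $(n+m-1)$-dimensional polytope in the hyperplane $\sum_i x_i=1$. A good triangulation of $\mathcal C_G$ is a regular triangulation (induced by a height function on the lattice points of $\mathcal C_G$) whose vertex set is the set of all lattice points of $\mathcal C_G$ and which contains the standard simplex $\mathrm{conv}\{e_u,e_f: u\in V, f\in E\}$ as a maximal cell; simplices are identified with their vertex sets. For a simplex $S\in\mathcal T$: the selected nodes are $V(S)=\{u\in V: e_u\in S\}$; the squiggly edges $\widetilde E(S)=\{f:\widetilde e_f\in S\}$; the selected edges $\widehat E(S)=\{f: e_f\in S\}$;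 for non-loop edges $f$, $f\in\overleftarrow E(S)$ iff $\overleftarrow e_f\in S$ and $f\in\overrightarrow E(S)$ iff $\overrightarrow e_f\in S$ (loops are never in $\overleftarrow E(S)\cup\overrightarrow E(S)$); the double edges are $D(S)=(\overleftarrow E(S)\cup\overrightarrow E(S))\cap\widehat E(S)$. *)

theory Defs
  imports Complex_Main
begin

text \<open>A finite multigraph is given by a node set V, an edge set E and, for every
edge f, a fixed ordering (src f, tgt f) of its endpoints (src f = tgt f for a loop).
Points of R^V x R^E are functions on the index type 'v + 'e (Inl u for nodes,
Inr f for edges); only coordinates in Inl ` V \<union> Inr ` E are ever nonzero.\<close>

type_synonym ('v, 'e) pt = "'v + 'e \<Rightarrow> real"

definition multigraph :: "'v set \<Rightarrow> 'e set \<Rightarrow> ('e \<Rightarrow> 'v) \<Rightarrow> ('e \<Rightarrow> 'v) \<Rightarrow> bool" where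
  "multigraph V E src tgt \<longleftrightarrow> finite V \<and> finite E \<and> (\<forall>f\<in>E. src f \<in> V \<and> tgt f \<in> V)"

definition coords :: "'v set \<Rightarrow> 'e set \<Rightarrow> ('v + 'e) set" where
  "coords V E = Inl ` V \<union> Inr ` E"

definition unitv :: "'i \<Rightarrow> 'i \<Rightarrow> real" where
  "unitv i = (\<lambda>j. if j = i then 1 else 0)"

definition e_node :: "'v \<Rightarrow> ('v, 'e) pt" where
  "e_node u = unitv (Inl u)"

definition e_edge :: "'e \<Rightarrow> ('v, 'e) pt" where
  "e_edge f = unitv (Inr f)"

definition e_tilde :: "('e \<Rightarrow> 'v) \<Rightarrow> ('e \<Rightarrow> 'v) \<Rightarrow> 'e \<Rightarrow> ('v, 'e) pt" where
  "e_tilde src tgt f = (\<lambda>i. unitv (Inl (src f)) i + unitv (Inl (tgt f)) i - unitv (Inr f) i)"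

definition e_left :: "('e \<Rightarrow> 'v) \<Rightarrow> ('e \<Rightarrow> 'v) \<Rightarrow> 'e \<Rightarrow> ('v, 'e) pt" where
  "e_left src tgt f = (\<lambda>i. unitv (Inl (src f)) i - unitv (Inl (tgt f)) i + unitv (Inr f) i)"

definition e_right :: "('e \<Rightarrow> 'v) \<Rightarrow> ('e \<Rightarrow> 'v) \<Rightarrow> 'e \<Rightarrow> ('v, 'e) pt" where
  "e_right src tgt f = (\<lambda>i. - unitv (Inl (src f)) i + unitv (Inl (tgt f)) i + unitv (Inr f) i)"

definition cosmo_points :: "'v set \<Rightarrow> 'e set \<Rightarrow> ('e \<Rightarrow> 'v) \<Rightarrow> ('e \<Rightarrow> 'v) \<Rightarrow> ('v, 'e) pt set" where
  "cosmo_points V E src tgt =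
     e_node ` V \<union> e_edge ` E \<union> e_tilde src tgt ` E \<union> e_left src tgt ` E \<union> e_right src tgt ` E"

definition std_simplex :: "'v set \<Rightarrow> 'e set \<Rightarrow> ('v, 'e) pt set" where
  "std_simplex V E = e_node ` V \<union> e_edge ` E"

definition lin :: "('v + 'e) set \<Rightarrow> ('v, 'e) pt \<Rightarrow> ('v, 'e) pt \<Rightarrow> real" where
  "lin I c x = (\<Sum>i\<in>I. c i * x i)"

text \<open>Cells (faces) of the regular subdivision of the point configuration A
induced by the height function h: sets sigma of points of A on which some affine
function lies on the lifted points, with all other points strictly above it.\<close>
definition regular_cells :: "('v + 'e) set \<Rightarrow> ('v, 'e) pt set \<Rightarrow> (('v, 'e) pt \<Rightarrow> real)
     \<Rightarrow> ('v, 'e) pt set set" where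
  "regular_cells I A h = {\<sigma>. \<sigma> \<subseteq> A \<and>
     (\<exists>c d. (\<forall>a\<in>\<sigma>. lin I c a + d = h a) \<and> (\<forall>a\<in>A - \<sigma>. lin I c a + d < h a))}"

definition aff_indep :: "('v + 'e) set \<Rightarrow> ('v, 'e) pt set \<Rightarrow> bool" where
  "aff_indep I \<sigma> \<longleftrightarrow> (\<forall>\<mu>. (\<Sum>a\<in>\<sigma>. \<mu> a) = 0 \<and> (\<forall>i\<in>I. (\<Sum>a\<in>\<sigma>. \<mu> a * a i) = 0)
                          \<longrightarrow> (\<forall>a\<in>\<sigma>. \<mu> a = 0))"

definition maximal_in :: "'a set \<Rightarrow> 'a set set \<Rightarrow> bool" where
  "maximal_in S T \<longleftrightarrow> S \<in> T \<and> \<not> (\<exists>S'\<in>T. S \<subset> S')"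

definition good_triangulation :: "'v set \<Rightarrow> 'e set \<Rightarrow> ('e \<Rightarrow> 'v) \<Rightarrow> ('e \<Rightarrow> 'v)
     \<Rightarrow> ('v, 'e) pt set set \<Rightarrow> bool" where
  "good_triangulation V E src tgt T \<longleftrightarrow>
     (\<exists>h. T = regular_cells (coords V E) (cosmo_points V E src tgt) h) \<and>
     (\<forall>\<sigma>\<in>T. aff_indep (coords V E) \<sigma>) \<and>
     \<Union>T = cosmo_points V E src tgt \<and>
     maximal_in (std_simplex V E) T"

definition selected_nodes :: "'v set \<Rightarrow> ('v, 'e) pt set \<Rightarrow> 'v set" where
  "selected_nodes V S = {u\<in>V. e_node u \<in> S}"

definition double_edges :: "'e set \<Rightarrow> ('e \<Rightarrow> 'v) \<Rightarrow> ('e \<Rightarrow> 'v) \<Rightarrow> ('v, 'e) pt set \<Rightarrow> 'e set" where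
  "double_edges E src tgt S = {f\<in>E. src f \<noteq> tgt f \<and> e_edge f \<in> S \<and>
      (e_left src tgt f \<in> S \<or> e_right src tgt f \<in> S)}"

definition adj :: "('e \<Rightarrow> 'v) \<Rightarrow> ('e \<Rightarrow> 'v) \<Rightarrow> 'e set \<Rightarrow> ('v \<times> 'v) set" where
  "adj src tgt D = {(src f, tgt f) | f. f \<in> D} \<union> {(tgt f, src f) | f. f \<in> D}"

definition component :: "'v set \<Rightarrow> ('e \<Rightarrow> 'v) \<Rightarrow> ('e \<Rightarrow> 'v) \<Rightarrow> 'e set \<Rightarrow> 'v \<Rightarrow> 'v set" where
  "component V src tgt D u = {w\<in>V. (u, w) \<in> (adj src tgt D)\<^sup>*}"

definition components :: "'v set \<Rightarrow> ('e \<Rightarrow> 'v) \<Rightarrow> ('e \<Rightarrow> 'v) \<Rightarrow> 'e set \<Rightarrow> 'v set set" where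
  "components V src tgt D = component V src tgt D ` V"

end

(*
  The standard simplex Z is a cell of the regular triangulation, so for any cell S, points p, q
  of S and r, s of Z with p + q = r + s force p into Z (compare the two supporting affine
  functions at the lifted points).  The relations
    e_tilde f + e_edge f = e_u + e_v,      e_tilde f + e_left f = 2 e_u,
    e_tilde f + e_right f = 2 e_v,         e_left f + e_right f = 2 e_edge f
  therefore exclude these pairs from S (the last one for non-loops only).

  Uniqueness: along a double edge f = uv of S, e_v - e_u equals e_edge f - e_left f or
  e_right f - e_edge f, so a path of double edges between two selected nodes writes their
  difference as a zero-sum combination of non-node points of S, contradicting the affine
  independence of S.

  Existence: if a component C of (V, D(S)) has no selected node, the indicator weights of C on
  the nodes extend, thanks to the excluded pairs, to a linear functional vanishing on S and
  positive at e_u for u in C.  Tilting the height function of S along it yields a strictly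
  larger cell, contradicting the maximality of S.
*)
theory Submission
  imports Defs
begin

lemma lin_add: "lin I c (\<lambda>i. x i + y i) = lin I c x + lin I c y"
  unfolding lin_def by (simp add: sum.distrib algebra_simps)

lemma lin_diff: "lin I c (\<lambda>i. x i - y i) = lin I c x - lin I c y"
  unfolding lin_def by (simp add: sum_subtractf algebra_simps)

lemma lin_uminus: "lin I c (\<lambda>i. - x i) = - lin I c x"
  unfolding lin_def by (simp add: sum_negf)

lemma lin_unitv: "finite I \<Longrightarrow> j \<in> I \<Longrightarrow> lin I c (unitv j) = c j"
  unfolding lin_def unitv_def by (simp add: if_distrib cong: if_cong)

lemma lin_tilt: "lin I (\<lambda>i. c i + t * c' i) a = lin I c a + t * lin I c' a"
  unfolding lin_def by (simp add: sum.distrib sum_distrib_left algebra_simps)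

lemma regular_cellsE:
  assumes "\<sigma> \<in> regular_cells I A h"
  obtains c d where "\<sigma> \<subseteq> A" "\<And>a. a \<in> \<sigma> \<Longrightarrow> lin I c a + d = h a"
    "\<And>a. a \<in> A - \<sigma> \<Longrightarrow> lin I c a + d < h a" "\<And>a. a \<in> A \<Longrightarrow> lin I c a + d \<le> h a"
proof -
  from assms obtain c d where "\<sigma> \<subseteq> A" "\<forall>a\<in>\<sigma>. lin I c a + d = h a"
    "\<forall>a\<in>A - \<sigma>. lin I c a + d < h a"
    unfolding regular_cells_def by blast
  then show thesis by (intro that[of c d]) (auto simp: order_le_less)
qed

lemma regular_cells_exchange:
  assumes \<sigma>: "\<sigma> \<in> regular_cells I A h" and \<tau>: "\<tau> \<in> regular_cells I A h"
    and "p \<in> \<sigma>" "q \<in> \<sigma>" "r \<in> \<tau>" "s \<in> \<tau>" and sum_eq: "\<And>i. p i + q i = r i + s i"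
  shows "p \<in> \<tau>"
proof (rule ccontr)
  assume "p \<notin> \<tau>"
  obtain c d where "\<sigma> \<subseteq> A" and on_\<sigma>: "\<And>a. a \<in> \<sigma> \<Longrightarrow> lin I c a + d = h a"
    and below_\<sigma>: "\<And>a. a \<in> A \<Longrightarrow> lin I c a + d \<le> h a"
    using \<sigma> by (elim regular_cellsE) blast
  obtain c' d' where "\<tau> \<subseteq> A" and on_\<tau>: "\<And>a. a \<in> \<tau> \<Longrightarrow> lin I c' a + d' = h a"
    and off_\<tau>: "\<And>a. a \<in> A - \<tau> \<Longrightarrow> lin I c' a + d' < h a"
    and below_\<tau>: "\<And>a. a \<in> A \<Longrightarrow> lin I c' a + d' \<le> h a"
    using \<tau> by (elim regular_cellsE) blast
  have lin_sum: "lin I b p + lin I b q = lin I b r + lin I b s" for b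
    using lin_add[of I b p q] lin_add[of I b r s] sum_eq by simp
  have "r \<in> A" "s \<in> A" "p \<in> A" "q \<in> A"
    using assms(3-6) \<open>\<sigma> \<subseteq> A\<close> \<open>\<tau> \<subseteq> A\<close> by auto
  have "h p + h q = lin I c r + lin I c s + 2 * d"
    using on_\<sigma>[of p] on_\<sigma>[of q] lin_sum[of c] assms(3,4) by simp
  also have "\<dots> \<le> h r + h s"
    using below_\<sigma>[of r] below_\<sigma>[of s] \<open>r \<in> A\<close> \<open>s \<in> A\<close> by simp
  also have "\<dots> = lin I c' p + lin I c' q + 2 * d'"
    using on_\<tau>[of r] on_\<tau>[of s] lin_sum[of c'] assms(5,6) by simp
  also have "\<dots> < h p + h q"
    using off_\<tau>[of p] below_\<tau>[of q] \<open>p \<notin> \<tau>\<close> \<open>p \<in> A\<close> \<open>q \<in> A\<close> by simp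
  finally show False by simp
qed

lemma regular_cells_contact_set:
  assumes "\<And>a. a \<in> A \<Longrightarrow> lin I c a + d \<le> h a"
  shows "{a\<in>A. lin I c a + d = h a} \<in> regular_cells I A h"
  unfolding regular_cells_def using assms by (auto intro!: exI[of _ c] exI[of _ d] simp: order_less_le)

lemma regular_cells_tilt:
  assumes "finite A" and \<sigma>: "\<sigma> \<in> regular_cells I A h"
    and vanish: "\<And>a. a \<in> \<sigma> \<Longrightarrow> lin I c' a = 0" and "a\<^sub>0 \<in> A" "lin I c' a\<^sub>0 > 0"
  shows "\<exists>\<sigma>'\<in>regular_cells I A h. \<sigma> \<subset> \<sigma>'"
proof -
  obtain c d where "\<sigma> \<subseteq> A" and on_\<sigma>: "\<And>a. a \<in> \<sigma> \<Longrightarrow> lin I c a + d = h a"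
    and off_\<sigma>: "\<And>a. a \<in> A - \<sigma> \<Longrightarrow> lin I c a + d < h a"
    and below_\<sigma>: "\<And>a. a \<in> A \<Longrightarrow> lin I c a + d \<le> h a"
    using \<sigma> by (elim regular_cellsE) blast
  \<comment> \<open>Tilt the supporting function along c' until it first meets a lifted point
    where c' is positive.\<close>
  define P where "P = {a\<in>A. lin I c' a > 0}"
  define gap where "gap a = (h a - (lin I c a + d)) / lin I c' a" for a
  define t where "t = Min (gap ` P)"
  have "P \<subseteq> A - \<sigma>" unfolding P_def using vanish by auto
  have "finite P" using \<open>finite A\<close> unfolding P_def by simp
  have "a\<^sub>0 \<in> P" unfolding P_def using assms(4,5) by simp
  have "t \<in> gap ` P" unfolding t_def using \<open>finite P\<close> \<open>a\<^sub>0 \<in> P\<close> by (intro Min_in) auto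
  then obtain a\<^sub>1 where "a\<^sub>1 \<in> P" "gap a\<^sub>1 = t" by blast
  then have "t > 0"
    using \<open>P \<subseteq> A - \<sigma>\<close> off_\<sigma>[of a\<^sub>1] unfolding gap_def P_def by auto
  have below: "lin I (\<lambda>i. c i + t * c' i) a + d \<le> h a" if "a \<in> A" for a
  proof (cases "a \<in> P")
    case True
    then have "t \<le> gap a" unfolding t_def using \<open>finite P\<close> by simp
    with True show ?thesis unfolding gap_def P_def lin_tilt by (auto simp: field_simps)
  next
    case False
    then have "t * lin I c' a \<le> 0"
      using that \<open>t > 0\<close> unfolding P_def by (auto simp: mult_nonneg_nonpos)
    with below_\<sigma>[OF that] show ?thesis unfolding lin_tilt by linarith
  qed
  have "lin I (\<lambda>i. c i + t * c' i) a\<^sub>1 + d = h a\<^sub>1"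
  proof -
    have "lin I c' a\<^sub>1 > 0" using \<open>a\<^sub>1 \<in> P\<close> unfolding P_def by simp
    with \<open>gap a\<^sub>1 = t\<close> have "t * lin I c' a\<^sub>1 = h a\<^sub>1 - (lin I c a\<^sub>1 + d)"
      unfolding gap_def by (simp add: field_simps)
    then show ?thesis unfolding lin_tilt by simp
  qed
  moreover have "lin I (\<lambda>i. c i + t * c' i) a + d = h a" if "a \<in> \<sigma>" for a
    using on_\<sigma>[OF that] vanish[OF that] unfolding lin_tilt by simp
  ultimately have "\<sigma> \<subset> {a\<in>A. lin I (\<lambda>i. c i + t * c' i) a + d = h a}"
    using \<open>\<sigma> \<subseteq> A\<close> \<open>a\<^sub>1 \<in> P\<close> \<open>P \<subseteq> A - \<sigma>\<close> by blast
  with regular_cells_contact_set[OF below] show ?thesis by blast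
qed

lemma maximal_regular_cell_functional_nonpos:
  assumes "finite A" "maximal_in \<sigma> (regular_cells I A h)"
    and "\<And>a. a \<in> \<sigma> \<Longrightarrow> lin I c' a = 0" and "a \<in> A"
  shows "lin I c' a \<le> 0"
  using regular_cells_tilt[of A \<sigma> I h c' a] assms unfolding maximal_in_def by force

definition zero_sum_span :: "('i \<Rightarrow> real) set \<Rightarrow> ('i \<Rightarrow> real) set" where
  "zero_sum_span P = {x. \<exists>\<mu>. (\<Sum>a\<in>P. \<mu> a) = 0 \<and> (\<forall>i. x i = (\<Sum>a\<in>P. \<mu> a * a i))}"

lemma zero_sum_span_zero: "(\<lambda>_. 0) \<in> zero_sum_span P"
  unfolding zero_sum_span_def by (intro CollectI exI[of _ "\<lambda>_. 0"]) simp

lemma zero_sum_span_add: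
  assumes "x \<in> zero_sum_span P" "y \<in> zero_sum_span P"
  shows "(\<lambda>i. x i + y i) \<in> zero_sum_span P"
proof -
  obtain \<mu> \<nu> where "(\<Sum>a\<in>P. \<mu> a) = 0" "\<forall>i. x i = (\<Sum>a\<in>P. \<mu> a * a i)"
    "(\<Sum>a\<in>P. \<nu> a) = 0" "\<forall>i. y i = (\<Sum>a\<in>P. \<nu> a * a i)"
    using assms unfolding zero_sum_span_def by blast
  then show ?thesis unfolding zero_sum_span_def
    by (intro CollectI exI[of _ "\<lambda>a. \<mu> a + \<nu> a"]) (simp add: sum.distrib distrib_right)
qed

lemma zero_sum_span_uminus:
  assumes "x \<in> zero_sum_span P"
  shows "(\<lambda>i. - x i) \<in> zero_sum_span P"
proof -
  obtain \<mu> where "(\<Sum>a\<in>P. \<mu> a) = 0" "\<forall>i. x i = (\<Sum>a\<in>P. \<mu> a * a i)"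
    using assms unfolding zero_sum_span_def by blast
  then show ?thesis unfolding zero_sum_span_def
    by (intro CollectI exI[of _ "\<lambda>a. - \<mu> a"]) (simp add: sum_negf)
qed

lemma zero_sum_span_diff:
  assumes "finite P" "p \<in> P" "q \<in> P"
  shows "(\<lambda>i. p i - q i) \<in> zero_sum_span P"
  unfolding zero_sum_span_def
proof (intro CollectI exI conjI allI)
  let ?\<mu> = "\<lambda>a. (if a = p then 1 else 0) - (if a = q then 1 else 0) :: real"
  show "(\<Sum>a\<in>P. ?\<mu> a) = 0" using assms by (simp add: sum_subtractf)
  show "p i - q i = (\<Sum>a\<in>P. ?\<mu> a * a i)" for i
  proof -
    have "(\<Sum>a\<in>P. ?\<mu> a * a i) = (\<Sum>a\<in>P. (if a = p then a i else 0) - (if a = q then a i else 0))"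
      by (intro sum.cong) auto
    then show ?thesis using assms by (simp add: sum_subtractf)
  qed
qed

lemma aff_indep_diff_notin_zero_sum_span:
  assumes indep: "aff_indep I \<sigma>" and "finite \<sigma>" "P \<subseteq> \<sigma>"
    and "p \<in> \<sigma> - P" "q \<in> \<sigma> - P" "p \<noteq> q"
  shows "(\<lambda>i. p i - q i) \<notin> zero_sum_span P"
proof
  assume "(\<lambda>i. p i - q i) \<in> zero_sum_span P"
  then obtain \<mu> where \<mu>_sum: "(\<Sum>a\<in>P. \<mu> a) = 0"
    and \<mu>_comb: "\<And>i. p i - q i = (\<Sum>a\<in>P. \<mu> a * a i)"
    unfolding zero_sum_span_def by blast
  define \<nu> where "\<nu> a = (if a \<in> P then \<mu> a else 0) - (if a = p then 1 else 0) + (if a = q then 1 else 0)"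
    for a
  have restrict: "(\<Sum>a\<in>\<sigma>. if a \<in> P then g a else 0) = (\<Sum>a\<in>P. g a)" for g :: "_ \<Rightarrow> real"
    using sum.inter_restrict[OF \<open>finite \<sigma>\<close>, of g P] \<open>P \<subseteq> \<sigma>\<close> by (simp add: Int_absorb1)
  have "(\<Sum>a\<in>\<sigma>. \<nu> a) = 0"
    using assms(2,4,5) \<mu>_sum restrict[of \<mu>] unfolding \<nu>_def by (simp add: sum.distrib sum_subtractf)
  moreover have "(\<Sum>a\<in>\<sigma>. \<nu> a * a i) = 0" for i
  proof -
    have "(\<Sum>a\<in>\<sigma>. \<nu> a * a i) = (\<Sum>a\<in>\<sigma>. (if a \<in> P then \<mu> a * a i else 0)
        - (if a = p then p i else 0) + (if a = q then q i else 0))"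
      unfolding \<nu>_def by (intro sum.cong) (auto simp: algebra_simps)
    also have "\<dots> = (p i - q i) - p i + q i"
      using assms(2,4,5) \<mu>_comb[of i] restrict[of "\<lambda>a. \<mu> a * a i"]
      by (simp add: sum.distrib sum_subtractf)
    finally show ?thesis by simp
  qed
  ultimately have "\<nu> p = 0" using indep \<open>p \<in> \<sigma> - P\<close> unfolding aff_indep_def by blast
  then show False using \<open>p \<in> \<sigma> - P\<close> \<open>p \<noteq> q\<close> unfolding \<nu>_def by simp
qed

lemma e_node_inject: "e_node u = e_node w \<longleftrightarrow> u = w"
  unfolding e_node_def unitv_def by (auto dest!: fun_cong[where x = "Inl u"] split: if_splits)

lemma neg_coord_notin_range_e_node: "p j < 0 \<Longrightarrow> p \<notin> range e_node"
  unfolding e_node_def unitv_def by (auto split: if_splits)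

lemma neg_coord_notin_std_simplex: "p j < 0 \<Longrightarrow> p \<notin> std_simplex V E"
  unfolding std_simplex_def e_node_def e_edge_def unitv_def by (auto split: if_splits)

lemma e_edge_notin_range_e_node: "e_edge f \<notin> range e_node"
  unfolding e_edge_def e_node_def unitv_def by (auto dest!: fun_cong[where x = "Inr f"])

lemma e_tilde_neg_coord: "e_tilde src tgt f (Inr f) = -1"
  unfolding e_tilde_def unitv_def by simp

lemma e_left_neg_coord: "src f \<noteq> tgt f \<Longrightarrow> e_left src tgt f (Inl (tgt f)) = -1"
  unfolding e_left_def unitv_def by simp

lemma e_right_neg_coord: "src f \<noteq> tgt f \<Longrightarrow> e_right src tgt f (Inl (src f)) = -1"
  unfolding e_right_def unitv_def by simp

lemma e_left_loop: "src f = tgt f \<Longrightarrow> e_left src tgt f = e_edge f"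
  unfolding e_left_def e_edge_def by simp

lemma e_right_loop: "src f = tgt f \<Longrightarrow> e_right src tgt f = e_edge f"
  unfolding e_right_def e_edge_def by simp

lemma double_edge_in_zero_sum_span:
  assumes "finite S" "f \<in> double_edges E src tgt S"
  shows "(\<lambda>i. e_node (tgt f) i - e_node (src f) i) \<in> zero_sum_span (S - range e_node)"
proof -
  from assms(2) have "src f \<noteq> tgt f" "e_edge f \<in> S"
    and "e_left src tgt f \<in> S \<or> e_right src tgt f \<in> S"
    unfolding double_edges_def by auto
  have fin: "finite (S - range e_node)" using assms(1) by simp
  have edge: "e_edge f \<in> S - range e_node"
    using \<open>e_edge f \<in> S\<close> e_edge_notin_range_e_node by simp
  consider "e_left src tgt f \<in> S" | "e_right src tgt f \<in> S"
    using \<open>e_left src tgt f \<in> S \<or> e_right src tgt f \<in> S\<close> by blast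
  then show ?thesis
  proof cases
    case 1
    then have "e_left src tgt f \<in> S - range e_node"
      using neg_coord_notin_range_e_node[of "e_left src tgt f" "Inl (tgt f)"]
        e_left_neg_coord[of src f tgt] \<open>src f \<noteq> tgt f\<close> by simp
    moreover have "(\<lambda>i. e_node (tgt f) i - e_node (src f) i) = (\<lambda>i. e_edge f i - e_left src tgt f i)"
      by (simp add: e_node_def e_edge_def e_left_def)
    ultimately show ?thesis using zero_sum_span_diff[OF fin edge] by simp
  next
    case 2
    then have "e_right src tgt f \<in> S - range e_node"
      using neg_coord_notin_range_e_node[of "e_right src tgt f" "Inl (src f)"]
        e_right_neg_coord[of src f tgt] \<open>src f \<noteq> tgt f\<close> by simp
    moreover have "(\<lambda>i. e_node (tgt f) i - e_node (src f) i) = (\<lambda>i. e_right src tgt f i - e_edge f i)"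
      by (simp add: e_node_def e_edge_def e_right_def)
    ultimately show ?thesis using zero_sum_span_diff[OF fin _ edge] by simp
  qed
qed

lemma double_edge_walk_in_zero_sum_span:
  assumes "finite S" "(x, y) \<in> (adj src tgt (double_edges E src tgt S))\<^sup>*"
  shows "(\<lambda>i. e_node y i - e_node x i) \<in> zero_sum_span (S - range e_node)"
  using assms(2)
proof (induction rule: rtrancl_induct)
  case base
  show ?case using zero_sum_span_zero by simp
next
  case (step y z)
  from step.hyps(2) obtain f where f: "f \<in> double_edges E src tgt S"
    and "(y = src f \<and> z = tgt f) \<or> (y = tgt f \<and> z = src f)"
    unfolding adj_def by blast
  then have "(\<lambda>i. e_node z i - e_node y i) \<in> zero_sum_span (S - range e_node)"
    using double_edge_in_zero_sum_span[OF assms(1) f] zero_sum_span_uminus by fastforce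
  from zero_sum_span_add[OF step.IH this] show ?case by simp
qed

lemma selected_nodes_joined_by_double_edges_eq:
  assumes "finite S" "aff_indep I S"
    and "w \<in> selected_nodes V S" "w' \<in> selected_nodes V S"
    and "(w, w') \<in> (adj src tgt (double_edges E src tgt S))\<^sup>*"
  shows "w = w'"
proof (rule ccontr)
  assume "w \<noteq> w'"
  have "e_node w \<in> S - (S - range e_node)" "e_node w' \<in> S - (S - range e_node)"
    using assms(3,4) unfolding selected_nodes_def by auto
  with assms(1-2) \<open>w \<noteq> w'\<close> have "(\<lambda>i. e_node w' i - e_node w i) \<notin> zero_sum_span (S - range e_node)"
    by (intro aff_indep_diff_notin_zero_sum_span) (auto simp: e_node_inject)
  with double_edge_walk_in_zero_sum_span[OF assms(1,5)] show False by contradiction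
qed

lemma cosmo_pointsE:
  assumes "a \<in> cosmo_points V E src tgt"
  obtains (node) x where "x \<in> V" "a = e_node x"
    | (edge) f where "f \<in> E" "a = e_edge f"
    | (tilde) f where "f \<in> E" "a = e_tilde src tgt f"
    | (left) f where "f \<in> E" "a = e_left src tgt f"
    | (right) f where "f \<in> E" "a = e_right src tgt f"
  using assms unfolding cosmo_points_def by blast

lemma finite_cosmo_points: "multigraph V E src tgt \<Longrightarrow> finite (cosmo_points V E src tgt)"
  unfolding multigraph_def cosmo_points_def by simp

lemma lin_coords_cosmo_points:
  assumes "multigraph V E src tgt"
  shows "x \<in> V \<Longrightarrow> lin (coords V E) c (e_node x) = c (Inl x)"
    and "f \<in> E \<Longrightarrow> lin (coords V E) c (e_edge f) = c (Inr f)"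
    and "f \<in> E \<Longrightarrow> lin (coords V E) c (e_tilde src tgt f) = c (Inl (src f)) + c (Inl (tgt f)) - c (Inr f)"
    and "f \<in> E \<Longrightarrow> lin (coords V E) c (e_left src tgt f) = c (Inl (src f)) - c (Inl (tgt f)) + c (Inr f)"
    and "f \<in> E \<Longrightarrow> lin (coords V E) c (e_right src tgt f) = - c (Inl (src f)) + c (Inl (tgt f)) + c (Inr f)"
  using assms unfolding multigraph_def coords_def
    e_node_def e_edge_def e_tilde_def e_left_def e_right_def
  by (simp_all add: lin_add lin_diff lin_uminus lin_unitv)

lemma good_triangulation_cell_exchange:
  assumes "good_triangulation V E src tgt T" "S \<in> T" "p \<in> S" "q \<in> S"
    and "r \<in> std_simplex V E" "s \<in> std_simplex V E" "\<And>i. p i + q i = r i + s i"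
  shows "p \<in> std_simplex V E"
proof -
  obtain h where "T = regular_cells (coords V E) (cosmo_points V E src tgt) h"
    and "std_simplex V E \<in> T"
    using assms(1) unfolding good_triangulation_def maximal_in_def by blast
  then show ?thesis using regular_cells_exchange assms(2-7) by metis
qed

lemma good_triangulation_cell_excluded_pairs:
  assumes G: "multigraph V E src tgt" and good: "good_triangulation V E src tgt T"
    and "S \<in> T" "f \<in> E"
  shows "e_tilde src tgt f \<in> S \<Longrightarrow> e_edge f \<notin> S"
    and "e_tilde src tgt f \<in> S \<Longrightarrow> e_left src tgt f \<notin> S"
    and "e_tilde src tgt f \<in> S \<Longrightarrow> e_right src tgt f \<notin> S"
    and "src f \<noteq> tgt f \<Longrightarrow> e_left src tgt f \<in> S \<Longrightarrow> e_right src tgt f \<notin> S"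
proof -
  have in_std: "e_node (src f) \<in> std_simplex V E" "e_node (tgt f) \<in> std_simplex V E"
    "e_edge f \<in> std_simplex V E"
    using G \<open>f \<in> E\<close> unfolding multigraph_def std_simplex_def by auto
  have tilde_out: "e_tilde src tgt f \<notin> std_simplex V E"
    using neg_coord_notin_std_simplex[of "e_tilde src tgt f" "Inr f" V E]
    by (simp add: e_tilde_neg_coord)
  have sums: "\<And>i. e_tilde src tgt f i + e_edge f i = e_node (src f) i + e_node (tgt f) i"
    "\<And>i. e_tilde src tgt f i + e_left src tgt f i = e_node (src f) i + e_node (src f) i"
    "\<And>i. e_tilde src tgt f i + e_right src tgt f i = e_node (tgt f) i + e_node (tgt f) i"
    "\<And>i. e_left src tgt f i + e_right src tgt f i = e_edge f i + e_edge f i"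
    by (simp_all add: e_tilde_def e_left_def e_right_def e_edge_def e_node_def)
  note exchange = good_triangulation_cell_exchange[OF good \<open>S \<in> T\<close>]
  show "e_edge f \<notin> S" if "e_tilde src tgt f \<in> S"
    using exchange[OF that _ in_std(1,2) sums(1)] tilde_out by blast
  show "e_left src tgt f \<notin> S" if "e_tilde src tgt f \<in> S"
    using exchange[OF that _ in_std(1,1) sums(2)] tilde_out by blast
  show "e_right src tgt f \<notin> S" if "e_tilde src tgt f \<in> S"
    using exchange[OF that _ in_std(2,2) sums(3)] tilde_out by blast
  show "e_right src tgt f \<notin> S" if "src f \<noteq> tgt f" "e_left src tgt f \<in> S"
    using exchange[OF that(2) _ in_std(3,3) sums(4)] that(1)
      neg_coord_notin_std_simplex[of "e_left src tgt f" "Inl (tgt f)" V E]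
    by (auto simp: e_left_neg_coord)
qed

lemma node_weights_extend_to_vanishing_functional:
  fixes \<alpha> :: "'v \<Rightarrow> real"
  assumes G: "multigraph V E src tgt" and good: "good_triangulation V E src tgt T" and "S \<in> T"
    and unselected: "\<And>x. x \<in> selected_nodes V S \<Longrightarrow> \<alpha> x = 0"
    and balanced: "\<And>f. f \<in> double_edges E src tgt S \<Longrightarrow> \<alpha> (src f) = \<alpha> (tgt f)"
  obtains c where "\<And>a. a \<in> S \<Longrightarrow> lin (coords V E) c a = 0"
    and "\<And>x. x \<in> V \<Longrightarrow> lin (coords V E) c (e_node x) = \<alpha> x"
proof -
  \<comment> \<open>The excluded pairs leave at most one constraint on the edge coordinate of each edge.\<close>
  define \<beta> where "\<beta> f =
    (if e_edge f \<in> S then 0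
     else if e_tilde src tgt f \<in> S then \<alpha> (src f) + \<alpha> (tgt f)
     else if e_left src tgt f \<in> S then \<alpha> (tgt f) - \<alpha> (src f)
     else \<alpha> (src f) - \<alpha> (tgt f))" for f
  let ?c = "case_sum \<alpha> \<beta>"
  note lin_points = lin_coords_cosmo_points[OF G, of _ ?c]
  note excluded = good_triangulation_cell_excluded_pairs[OF G good \<open>S \<in> T\<close>]
  have balanced_edge: "\<alpha> (src f) = \<alpha> (tgt f)"
    if "f \<in> E" "e_edge f \<in> S" "e_left src tgt f \<in> S \<or> e_right src tgt f \<in> S" for f
  proof (cases "src f = tgt f")
    case False
    with that have "f \<in> double_edges E src tgt S" unfolding double_edges_def by simp
    then show ?thesis by (rule balanced)
  qed simp
  have "lin (coords V E) ?c a = 0" if "a \<in> S" for a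
  proof -
    have "a \<in> cosmo_points V E src tgt"
      using good \<open>S \<in> T\<close> \<open>a \<in> S\<close> unfolding good_triangulation_def by blast
    then show ?thesis
    proof (cases rule: cosmo_pointsE)
      case (node x)
      then show ?thesis using that unselected[of x] lin_points(1) by (simp add: selected_nodes_def)
    next
      case (edge f)
      then show ?thesis using that lin_points(2) by (simp add: \<beta>_def)
    next
      case (tilde f)
      then show ?thesis using that excluded(1) lin_points(3) by (simp add: \<beta>_def)
    next
      case (left f)
      then have "src f \<noteq> tgt f" if "e_edge f \<notin> S" using that \<open>a \<in> S\<close> e_left_loop by metis
      with left that show ?thesis
        using balanced_edge[of f] excluded(2) lin_points(4)
        by (cases "e_edge f \<in> S") (auto simp: \<beta>_def)
    next
      case (right f)
      then have "src f \<noteq> tgt f" if "e_edge f \<notin> S" using that \<open>a \<in> S\<close> e_right_loop by metis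
      with right that show ?thesis
        using balanced_edge[of f] excluded(3,4) lin_points(5)
        by (cases "e_edge f \<in> S") (auto simp: \<beta>_def)
    qed
  qed
  moreover have "lin (coords V E) ?c (e_node x) = \<alpha> x" if "x \<in> V" for x
    using lin_points(1)[OF that] by simp
  ultimately show thesis by (rule that)
qed

lemma maximal_cell_component_meets_selected_nodes:
  assumes G: "multigraph V E src tgt" and good: "good_triangulation V E src tgt T"
    and max: "maximal_in S T" and "u \<in> V"
  shows "component V src tgt (double_edges E src tgt S) u \<inter> selected_nodes V S \<noteq> {}"
proof
  let ?D = "double_edges E src tgt S"
  let ?C = "component V src tgt ?D u"
  assume no_selected: "?C \<inter> selected_nodes V S = {}"
  define \<alpha> where "\<alpha> x = (if x \<in> ?C then 1 else 0 :: real)" for x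
  have "S \<in> T" using max unfolding maximal_in_def by blast
  have "\<alpha> (src f) = \<alpha> (tgt f)" if "f \<in> ?D" for f
  proof -
    have "src f \<in> V" "tgt f \<in> V" "(src f, tgt f) \<in> adj src tgt ?D" "(tgt f, src f) \<in> adj src tgt ?D"
      using G that unfolding multigraph_def double_edges_def adj_def by auto
    then have "src f \<in> ?C \<longleftrightarrow> tgt f \<in> ?C"
      unfolding component_def by (auto intro: rtrancl_into_rtrancl)
    then show ?thesis unfolding \<alpha>_def by simp
  qed
  moreover have "\<alpha> x = 0" if "x \<in> selected_nodes V S" for x
    using no_selected that unfolding \<alpha>_def by auto
  ultimately obtain c where vanish: "\<And>a. a \<in> S \<Longrightarrow> lin (coords V E) c a = 0"
    and nodes: "\<And>x. x \<in> V \<Longrightarrow> lin (coords V E) c (e_node x) = \<alpha> x"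
    using node_weights_extend_to_vanishing_functional[OF G good \<open>S \<in> T\<close>] by metis
  obtain h where "T = regular_cells (coords V E) (cosmo_points V E src tgt) h"
    using good unfolding good_triangulation_def by blast
  with max have "lin (coords V E) c (e_node u) \<le> 0"
    using \<open>u \<in> V\<close> finite_cosmo_points[OF G] vanish
    by (intro maximal_regular_cell_functional_nonpos) (auto simp: cosmo_points_def)
  moreover have "u \<in> ?C" using \<open>u \<in> V\<close> unfolding component_def by simp
  ultimately show False using nodes[OF \<open>u \<in> V\<close>] unfolding \<alpha>_def by simp
qed

lemma sym_adj: "sym (adj src tgt D)"
  unfolding adj_def sym_def by blast

lemma component_rtrancl:
  assumes "w \<in> component V src tgt D u" "w' \<in> component V src tgt D u"
  shows "(w, w') \<in> (adj src tgt D)\<^sup>*"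
proof -
  have "(u, w) \<in> (adj src tgt D)\<^sup>*" "(u, w') \<in> (adj src tgt D)\<^sup>*"
    using assms unfolding component_def by auto
  with sym_rtrancl[OF sym_adj] show ?thesis by (meson rtrancl_trans symD)
qed

theorem mainTheorem3:
  fixes V :: "'v set" and E :: "'e set" and src tgt :: "'e \<Rightarrow> 'v"
    and T :: "('v, 'e) pt set set" and S :: "('v, 'e) pt set"
  assumes "multigraph V E src tgt"
    and "good_triangulation V E src tgt T"
    and "maximal_in S T"
  shows "\<forall>C\<in>components V src tgt (double_edges E src tgt S).
           card (C \<inter> selected_nodes V S) = 1"
proof
  fix C assume "C \<in> components V src tgt (double_edges E src tgt S)"
  then obtain u where "u \<in> V" and C: "C = component V src tgt (double_edges E src tgt S) u"
    unfolding components_def by blast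
  have "S \<in> T" using assms(3) unfolding maximal_in_def by blast
  then have "S \<subseteq> cosmo_points V E src tgt" "aff_indep (coords V E) S"
    using assms(2) unfolding good_triangulation_def by blast+
  then have "finite S" using finite_cosmo_points[OF assms(1)] finite_subset by blast
  obtain w where w: "w \<in> C \<inter> selected_nodes V S"
    using maximal_cell_component_meets_selected_nodes[OF assms \<open>u \<in> V\<close>] C by blast
  have "w' = w" if "w' \<in> C \<inter> selected_nodes V S" for w'
  proof (rule selected_nodes_joined_by_double_edges_eq)
    show "(w', w) \<in> (adj src tgt (double_edges E src tgt S))\<^sup>*"
      using that w unfolding C by (intro component_rtrancl) auto
  qed (use \<open>finite S\<close> \<open>aff_indep (coords V E) S\<close> that w in auto)
  with w have "C \<inter> selected_nodes V S = {w}" by blast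
  then show "card (C \<inter> selected_nodes V S) = 1" by simp
qed

end
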